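(* Let $p$ be a prime, $n\ge2$, $1\le m\le n-1$, $\beta>0$, and let $G\subset G(n,n-m)$ with $|G|\gtrsim p^{\beta}$. Let $E\subset\mathbb{F}_p^n$. (1) If for every $\xi\in\mathbb{F}_p^n\setminus\{0\}$ we have $|\{W\in G:\ \xi\in W\}|\lesssim |G|p^{-\beta}$, then $\mathcal{E}(E,G')\lesssim |E||G|+|E|^2|G|p^{-\beta}$. (2) If for every $\xi\in\mathbb{F}_p^n\setminus\{0\}$ we have $|\{W\in G:\ \xi\in Per(W)\}|\lesssim |G|p^{-\beta}$, then $\mathcal{E}(E,G')\lesssim p^{-m}|G|\,(|E|^2+|E|p^{n-\beta})$.
   Context: $\mathbb{F}_p$ is the field with $p$ elements; $G(n,k)$ is the set of $k$-dimensional linear subspaces of $\mathbb{F}_p^n$. For $W\in G(n,n-m)$, $W$ has exactly $p^m$ cosets $x_{W,j}+W$, $1\le j\le p^m$. For $G\subset G(n,n-m)$, $G'$ denotes the collection of all cosets of all $W\in G$, i.e. $G'=\{x_{W,j}+W:\ W\in G,\ 1\le j\le p^m\}$. For a collection $\mathcal{A}$ of affine subspaces and $E\subset\mathbb{F}_p^n$, the energy is $\mathcal{E}(E,\mathcal{A})=\sum_{V\in\mathcal{A}}|E\cap V|^2$. For a subspace $W$, $Per(W)=\{x\in\mathbb{F}_p^n:\ x\cdot w=0\ \text{for all } w\in W\}$, where $x\cdot w=\sum_i x_iw_i$. $|J|$ denotes cardinality. $f\lesssim g$ means $f\le Cg$ with $C$ independent of $p$ and $E$; the implied constants in the conclusions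 depend on those in the hypotheses. *)

theory Defs
  imports Complex_Main "HOL-Computational_Algebra.Primes"
begin

text \<open>Vectors of F_p^n are represented as functions nat => nat whose
  coordinates i < n lie in {0..<p} and whose coordinates i >= n are 0.
  All arithmetic is performed modulo p.\<close>

definition Fvec :: "nat \<Rightarrow> nat \<Rightarrow> (nat \<Rightarrow> nat) set" where
  "Fvec n p = {v. (\<forall>i<n. v i < p) \<and> (\<forall>i\<ge>n. v i = 0)}"

definition vzero :: "nat \<Rightarrow> nat" where
  "vzero = (\<lambda>i. 0)"

definition vadd :: "nat \<Rightarrow> (nat \<Rightarrow> nat) \<Rightarrow> (nat \<Rightarrow> nat) \<Rightarrow> (nat \<Rightarrow> nat)" where
  "vadd p u v = (\<lambda>i. (u i + v i) mod p)"

definition smul :: "nat \<Rightarrow> nat \<Rightarrow> (nat \<Rightarrow> nat) \<Rightarrow> (nat \<Rightarrow> nat)" where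
  "smul p c v = (\<lambda>i. (c * v i) mod p)"

definition lincomb :: "nat \<Rightarrow> nat \<Rightarrow> (nat \<Rightarrow> nat) \<Rightarrow> (nat \<Rightarrow> nat \<Rightarrow> nat) \<Rightarrow> (nat \<Rightarrow> nat)" where
  "lincomb p k c b = (\<lambda>i. (\<Sum>j<k. c j * b j i) mod p)"

definition is_subspace :: "nat \<Rightarrow> nat \<Rightarrow> (nat \<Rightarrow> nat) set \<Rightarrow> bool" where
  "is_subspace n p W \<longleftrightarrow> W \<subseteq> Fvec n p \<and> vzero \<in> W \<and>
     (\<forall>u\<in>W. \<forall>v\<in>W. vadd p u v \<in> W) \<and> (\<forall>c<p. \<forall>v\<in>W. smul p c v \<in> W)"

definition has_dim :: "nat \<Rightarrow> nat \<Rightarrow> nat \<Rightarrow> (nat \<Rightarrow> nat) set \<Rightarrow> bool" where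
  "has_dim n p k W \<longleftrightarrow> (\<exists>b. (\<forall>j<k. b j \<in> Fvec n p) \<and>
      (\<forall>c. (\<forall>j<k. c j < p) \<longrightarrow> lincomb p k c b = vzero \<longrightarrow> (\<forall>j<k. c j = 0)) \<and>
      W = {lincomb p k c b | c. \<forall>j<k. c j < p})"

definition Grass :: "nat \<Rightarrow> nat \<Rightarrow> nat \<Rightarrow> (nat \<Rightarrow> nat) set set" where
  "Grass p n k = {W. is_subspace n p W \<and> has_dim n p k W}"

definition coset :: "nat \<Rightarrow> (nat \<Rightarrow> nat) \<Rightarrow> (nat \<Rightarrow> nat) set \<Rightarrow> (nat \<Rightarrow> nat) set" where
  "coset p x W = (\<lambda>w. vadd p x w) ` W"

text \<open>G' : all cosets of all W in G.\<close>
definition cosets_of :: "nat \<Rightarrow> nat \<Rightarrow> (nat \<Rightarrow> nat) set set \<Rightarrow> (nat \<Rightarrow> nat) set set" where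
  "cosets_of n p G = (\<Union>W\<in>G. {coset p x W | x. x \<in> Fvec n p})"

definition energy :: "(nat \<Rightarrow> nat) set \<Rightarrow> (nat \<Rightarrow> nat) set set \<Rightarrow> nat" where
  "energy E A = (\<Sum>V\<in>A. card (E \<inter> V) ^ 2)"

definition dotp :: "nat \<Rightarrow> nat \<Rightarrow> (nat \<Rightarrow> nat) \<Rightarrow> (nat \<Rightarrow> nat) \<Rightarrow> nat" where
  "dotp n p x w = (\<Sum>i<n. x i * w i) mod p"

definition Per :: "nat \<Rightarrow> nat \<Rightarrow> (nat \<Rightarrow> nat) set \<Rightarrow> (nat \<Rightarrow> nat) set" where
  "Per n p W = {x \<in> Fvec n p. \<forall>w\<in>W. dotp n p x w = 0}"

end

theory Submission
  imports Defs "HOL-Number_Theory.Cong" "HOL-Analysis.Convex"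
begin

(*
  Every point lies in exactly one coset of each W, so the energy is the number of triples (W, x, y)
  with W in G, x, y in E and y - x in W.

  For (1), the diagonal triples number |E| |G|, and an off-diagonal pair (x, y) is counted once for
  each W in G containing the nonzero vector y - x, that is <~ |G| p^-beta times.

  For (2), y - x in W forces x.xi = y.xi for every xi in P = Per(W). A nonzero linear functional on
  a subspace P takes every value of F_p equally often, so a pair that P does not identify agrees on
  exactly |P|/p elements of P. Summing over pairs, with N(xi) the number of pairs (x, y) in E^2 with
  x.xi = y.xi and T_P the number of pairs identified by all of P,
    (1 - 1/p) |P| T_P = sum_{xi in P} (N(xi) - |E|^2/p),
  and every summand is nonnegative by Cauchy-Schwarz. As N(0) = |E|^2 and |Per W| >= p^m, this bounds
  T_P by (|E|^2 + 2 sum_{0 <> xi in P} (N(xi) - |E|^2/p)) / p^m. Summing over W, each nonzero xi is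
  counted <~ |G| p^-beta times, and the identity for P = F_p^n gives sum_xi (N(xi) - |E|^2/p) <= |E| p^n.
*)

section \<open>Vector arithmetic modulo p\<close>

lemma Fvec_lt: "v \<in> Fvec n p \<Longrightarrow> 0 < p \<Longrightarrow> v i < p"
  unfolding Fvec_def by (cases "i < n") auto

lemma Fvec_mod: "v \<in> Fvec n p \<Longrightarrow> 0 < p \<Longrightarrow> v i mod p = v i"
  using Fvec_lt by simp

lemma vzero_in_Fvec: "0 < p \<Longrightarrow> vzero \<in> Fvec n p"
  unfolding Fvec_def vzero_def by auto

lemma vadd_in_Fvec: "0 < p \<Longrightarrow> u \<in> Fvec n p \<Longrightarrow> v \<in> Fvec n p \<Longrightarrow> vadd p u v \<in> Fvec n p"
  unfolding Fvec_def vadd_def by auto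

lemma smul_in_Fvec: "0 < p \<Longrightarrow> v \<in> Fvec n p \<Longrightarrow> smul p c v \<in> Fvec n p"
  unfolding Fvec_def smul_def by auto

lemma bij_betw_Fvec_PiE: "bij_betw (\<lambda>v. restrict v {..<n}) (Fvec n p) ({..<n} \<rightarrow>\<^sub>E {..<p})"
  by (rule bij_betw_byWitness[where f'="\<lambda>f i. if i < n then f i else 0"])
     (auto simp: Fvec_def restrict_def PiE_def extensional_def fun_eq_iff)

lemma finite_Fvec: "finite (Fvec n p)"
  using bij_betw_finite[OF bij_betw_Fvec_PiE] by (simp add: finite_PiE)

lemma card_Fvec: "card (Fvec n p) = p ^ n"
  using bij_betw_same_card[OF bij_betw_Fvec_PiE] by (simp add: card_PiE)

lemma vadd_commute: "vadd p u v = vadd p v u"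
  unfolding vadd_def by (simp add: add.commute)

lemma vadd_assoc: "vadd p (vadd p u v) w = vadd p u (vadd p v w)"
  unfolding vadd_def by (simp add: mod_simps add.assoc)

lemma vadd_vzero: "0 < p \<Longrightarrow> x \<in> Fvec n p \<Longrightarrow> vadd p x vzero = x"
  unfolding vadd_def vzero_def using Fvec_mod by auto

lemma vzero_vadd: "0 < p \<Longrightarrow> x \<in> Fvec n p \<Longrightarrow> vadd p vzero x = x"
  by (subst vadd_commute) (rule vadd_vzero)

lemma vadd_smul_minus_one: "0 < p \<Longrightarrow> vadd p w (smul p (p - 1) w) = vzero"
proof
  fix i
  assume "0 < p"
  then have "w i + (p - 1) * w i = p * w i" by (cases p) auto
  then show "vadd p w (smul p (p - 1) w) i = vzero i"
    unfolding vadd_def smul_def vzero_def by (simp add: mod_add_right_eq)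
qed

(* y - x; adding p before reducing keeps the nat subtraction from truncating *)
definition vsub :: "nat \<Rightarrow> (nat \<Rightarrow> nat) \<Rightarrow> (nat \<Rightarrow> nat) \<Rightarrow> (nat \<Rightarrow> nat)" where
  "vsub p y x = (\<lambda>i. (y i + (p - x i)) mod p)"

lemma vsub_in_Fvec: "0 < p \<Longrightarrow> x \<in> Fvec n p \<Longrightarrow> y \<in> Fvec n p \<Longrightarrow> vsub p y x \<in> Fvec n p"
  unfolding Fvec_def vsub_def by auto

lemma vsub_vadd:
  assumes "0 < p" "x \<in> Fvec n p" "w \<in> Fvec n p"
  shows "vsub p (vadd p x w) x = w"
proof
  fix i
  have "x i < p" "w i < p" using Fvec_lt assms by auto
  then have "(x i + w i) mod p + (p - x i) = (if x i + w i < p then w i + p else w i)"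
    by (auto simp: mod_if)
  with \<open>w i < p\<close> show "vsub p (vadd p x w) x i = w i"
    unfolding vsub_def vadd_def by simp
qed

lemma vadd_vsub:
  assumes "0 < p" "x \<in> Fvec n p" "y \<in> Fvec n p"
  shows "vadd p x (vsub p y x) = y"
proof
  fix i
  have "x i < p" "y i < p" using Fvec_lt assms by auto
  then have "x i + (y i + (p - x i)) = y i + p" by simp
  with \<open>y i < p\<close> show "vadd p x (vsub p y x) i = y i"
    unfolding vadd_def vsub_def by (simp add: mod_add_right_eq)
qed

lemma vsub_eq_vzero_imp_eq:
  "0 < p \<Longrightarrow> x \<in> Fvec n p \<Longrightarrow> y \<in> Fvec n p \<Longrightarrow> vsub p y x = vzero \<Longrightarrow> y = x"
  by (metis vadd_vsub vadd_vzero)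

lemma inj_on_vadd: "0 < p \<Longrightarrow> x \<in> Fvec n p \<Longrightarrow> inj_on (vadd p x) (Fvec n p)"
  by (rule inj_on_inverseI[where g="\<lambda>z. vsub p z x"]) (simp add: vsub_vadd)

lemma subspace_finite: "is_subspace n p W \<Longrightarrow> finite W"
  unfolding is_subspace_def by (auto intro: finite_subset[OF _ finite_Fvec])

lemma Grass_subspace: "W \<in> Grass p n k \<Longrightarrow> is_subspace n p W"
  unfolding Grass_def by auto

lemma finite_Grass: "finite (Grass p n k)"
proof -
  have "Grass p n k \<subseteq> Pow (Fvec n p)" unfolding Grass_def is_subspace_def by auto
  then show ?thesis using finite_Fvec by (metis finite_Pow_iff finite_subset)
qed

section \<open>Cosets and energy\<close>

lemma coset_eq_if_mem:
  assumes p: "0 < p" and W: "is_subspace n p W" and "x \<in> coset p a W"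
  shows "coset p a W = coset p x W"
proof -
  obtain w1 where w1: "w1 \<in> W" "x = vadd p a w1"
    using \<open>x \<in> coset p a W\<close> unfolding coset_def by auto
  have W_add: "\<And>u v. u \<in> W \<Longrightarrow> v \<in> W \<Longrightarrow> vadd p u v \<in> W"
    and W_smul: "\<And>c v. c < p \<Longrightarrow> v \<in> W \<Longrightarrow> smul p c v \<in> W"
    and W_Fvec: "W \<subseteq> Fvec n p"
    using W unfolding is_subspace_def by auto
  show ?thesis
  proof
    show "coset p a W \<subseteq> coset p x W"
    proof
      fix z assume "z \<in> coset p a W"
      then obtain w where w: "w \<in> W" "z = vadd p a w" unfolding coset_def by auto
      have "vadd p w1 (smul p (p - 1) w1) = vzero"
        by (rule vadd_smul_minus_one[OF p])
      moreover have "vadd p vzero w = w"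
        using w(1) W_Fvec by (intro vzero_vadd[OF p]) auto
      ultimately have "z = vadd p a (vadd p (vadd p w1 (smul p (p - 1) w1)) w)"
        using w(2) by simp
      also have "\<dots> = vadd p x (vadd p (smul p (p - 1) w1) w)"
        using w1 by (simp add: vadd_assoc)
      finally show "z \<in> coset p x W"
        unfolding coset_def using W_add[OF W_smul[OF _ w1(1)] w(1)] p by auto
    qed
  next
    show "coset p x W \<subseteq> coset p a W"
    proof
      fix z assume "z \<in> coset p x W"
      then obtain w where w: "w \<in> W" "z = vadd p x w" unfolding coset_def by auto
      then have "z = vadd p a (vadd p w1 w)"
        using w1 by (simp add: vadd_assoc)
      then show "z \<in> coset p a W"
        unfolding coset_def using W_add[OF w1(1) w(1)] by auto
    qed
  qed
qed

lemma vsub_mem_if_mem_coset: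
  assumes "0 < p" "is_subspace n p W" "x \<in> Fvec n p" "y \<in> coset p x W"
  shows "vsub p y x \<in> W"
proof -
  obtain w where "w \<in> W" "y = vadd p x w" using assms(4) unfolding coset_def by auto
  moreover have "w \<in> Fvec n p" using \<open>w \<in> W\<close> assms(2) unfolding is_subspace_def by auto
  ultimately show ?thesis using vsub_vadd[OF assms(1,3)] by simp
qed

lemma sum_cosets_card_sq_le:
  assumes p: "0 < p" and W: "is_subspace n p W" and E: "finite E"
  shows "(\<Sum>V\<in>{coset p a W | a. a \<in> Fvec n p}. real (card (E \<inter> V)) ^ 2)
    \<le> (\<Sum>x\<in>E. \<Sum>y\<in>E. of_bool (y \<in> coset p x W))"
proof -
  define C where "C = {coset p a W | a. a \<in> Fvec n p}"
  define r where "r x = (\<Sum>y\<in>E. of_bool (y \<in> coset p x W) :: real)" for x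
  have fC: "finite C"
    unfolding C_def using finite_Fvec by (simp add: setcompr_eq_image)
  have V_eq: "V = coset p x W" if "V \<in> C" "x \<in> V" for V x
    using that coset_eq_if_mem[OF p W] unfolding C_def by auto
  have "real (card (E \<inter> V)) ^ 2 = (\<Sum>x\<in>E \<inter> V. r x)" if "V \<in> C" for V
  proof -
    have "r x = real (card (E \<inter> V))" if "x \<in> E \<inter> V" for x
      using V_eq[OF \<open>V \<in> C\<close>] that E unfolding r_def by (simp add: Int_def)
    then show ?thesis by (simp add: power2_eq_square)
  qed
  then have "(\<Sum>V\<in>C. real (card (E \<inter> V)) ^ 2) = (\<Sum>V\<in>C. \<Sum>x\<in>E \<inter> V. r x)"
    by simp
  also have "\<dots> = (\<Sum>(V, x)\<in>Sigma C (\<lambda>V. E \<inter> V). r x)"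
    using fC E by (simp add: sum.Sigma)
  also have "\<dots> = sum r (snd ` Sigma C (\<lambda>V. E \<inter> V))"
  proof -
    have "inj_on snd (Sigma C (\<lambda>V. E \<inter> V))"
    proof (rule inj_onI, clarsimp)
      fix V V' x
      assume "V \<in> C" "V' \<in> C" "x \<in> V" "x \<in> V'"
      then show "V = V'" using V_eq by metis
    qed
    then show ?thesis by (simp add: sum.reindex case_prod_beta)
  qed
  also have "\<dots> \<le> sum r E"
    using E unfolding r_def by (intro sum_mono2) (auto simp: sum_nonneg)
  finally show ?thesis unfolding C_def r_def .
qed

lemma energy_le_sum_coset_pairs:
  assumes p: "0 < p" and G: "finite G" "\<And>W. W \<in> G \<Longrightarrow> is_subspace n p W" and E: "finite E"
  shows "real (energy E (cosets_of n p G)) \<le> (\<Sum>W\<in>G. \<Sum>x\<in>E. \<Sum>y\<in>E. of_bool (y \<in> coset p x W))"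
proof -
  define C where "C W = {coset p a W | a. a \<in> Fvec n p}" for W
  have fC: "finite (C W)" for W
    unfolding C_def using finite_Fvec by (simp add: setcompr_eq_image)
  have "cosets_of n p G = snd ` Sigma G C"
    unfolding cosets_of_def C_def snd_image_Sigma ..
  then have "real (energy E (cosets_of n p G)) = (\<Sum>V\<in>snd ` Sigma G C. real (card (E \<inter> V)) ^ 2)"
    by (simp add: energy_def)
  also have "\<dots> \<le> (\<Sum>(W, V)\<in>Sigma G C. real (card (E \<inter> V)) ^ 2)"
    using sum_image_le[of "Sigma G C" "\<lambda>V. real (card (E \<inter> V)) ^ 2" snd] G fC
    by (simp add: case_prod_beta comp_def)
  also have "\<dots> = (\<Sum>W\<in>G. \<Sum>V\<in>C W. real (card (E \<inter> V)) ^ 2)"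
    using G fC by (simp add: sum.Sigma)
  also have "\<dots> \<le> (\<Sum>W\<in>G. \<Sum>x\<in>E. \<Sum>y\<in>E. of_bool (y \<in> coset p x W))"
    unfolding C_def using sum_cosets_card_sq_le[OF p G(2) E] by (intro sum_mono)
  finally show ?thesis .
qed

section \<open>Dot products and annihilators\<close>

lemma mod_add_eq_self_imp_zero: "a < p \<Longrightarrow> t < (p::nat) \<Longrightarrow> (a + t) mod p = a \<Longrightarrow> t = 0"
  by (metis add.commute add_right_imp_eq div_mod_decomp mod_less mod_mult_self2_is_0)

lemma sum_mod_mult_left: "(\<Sum>i<n. (f i mod p) * g i) mod p = (\<Sum>i<n. f i * g i) mod (p::nat)"
proof -
  have "(\<Sum>i<n. (f i mod p) * g i) mod p = (\<Sum>i<n. (f i mod p) * g i mod p) mod p"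
    by (simp add: mod_sum_eq)
  also have "\<dots> = (\<Sum>i<n. f i * g i mod p) mod p"
    by (simp add: mod_mult_left_eq)
  also have "\<dots> = (\<Sum>i<n. f i * g i) mod p"
    by (simp add: mod_sum_eq)
  finally show ?thesis .
qed

lemma sum_mod_mult_right: "(\<Sum>i<n. g i * (f i mod p)) mod p = (\<Sum>i<n. g i * f i) mod (p::nat)"
  using sum_mod_mult_left[of f p g n] by (simp add: mult.commute[of "g _"])

lemma dotp_commute: "dotp n p x w = dotp n p w x"
  unfolding dotp_def by (simp add: mult.commute)

lemma dotp_lt: "0 < p \<Longrightarrow> dotp n p x w < p"
  unfolding dotp_def by simp

lemma dotp_vadd_left: "dotp n p (vadd p u v) w = (dotp n p u w + dotp n p v w) mod p"
  unfolding dotp_def vadd_def by (simp add: sum_mod_mult_left distrib_right sum.distrib mod_add_eq)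

lemma dotp_smul_left: "dotp n p (smul p c u) w = (c * dotp n p u w) mod p"
  unfolding dotp_def smul_def
  by (simp add: sum_mod_mult_left sum_distrib_left mult.assoc mod_mult_right_eq)

lemma dotp_vadd_right: "dotp n p x (vadd p u v) = (dotp n p x u + dotp n p x v) mod p"
  using dotp_vadd_left dotp_commute by metis

lemma dotp_smul_right: "dotp n p x (smul p c u) = (c * dotp n p x u) mod p"
  using dotp_smul_left dotp_commute by metis

lemma dotp_vzero_left: "dotp n p vzero w = 0"
  unfolding dotp_def vzero_def by simp

lemma dotp_vzero_right: "dotp n p x vzero = 0"
  unfolding dotp_def vzero_def by simp

lemma dotp_lincomb_right: "dotp n p x (lincomb p k c b) = (\<Sum>j<k. c j * dotp n p x (b j)) mod p"
proof -
  have "dotp n p x (lincomb p k c b) = (\<Sum>i<n. x i * (\<Sum>j<k. c j * b j i)) mod p"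
    unfolding dotp_def lincomb_def by (rule sum_mod_mult_right)
  also have "(\<Sum>i<n. x i * (\<Sum>j<k. c j * b j i)) = (\<Sum>j<k. c j * (\<Sum>i<n. x i * b j i))"
    by (simp add: sum_distrib_left mult.left_commute sum.swap[of _ "{..<k}"])
  also have "(\<Sum>j<k. c j * (\<Sum>i<n. x i * b j i)) mod p = (\<Sum>j<k. c j * dotp n p x (b j)) mod p"
    unfolding dotp_def by (rule sum_mod_mult_right[symmetric])
  finally show ?thesis .
qed

lemma dotp_eq_iff_dotp_vsub_eq_0:
  assumes p: "0 < p" and "x \<in> Fvec n p" "y \<in> Fvec n p"
  shows "dotp n p x \<xi> = dotp n p y \<xi> \<longleftrightarrow> dotp n p (vsub p y x) \<xi> = 0"
proof -
  have "dotp n p y \<xi> = (dotp n p x \<xi> + dotp n p (vsub p y x) \<xi>) mod p"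
    using vadd_vsub[OF assms] dotp_vadd_left by metis
  then show ?thesis
    using mod_add_eq_self_imp_zero[OF dotp_lt[OF p] dotp_lt[OF p]] dotp_lt[OF p] by (metis mod_less add_0_right)
qed

lemma exists_dotp_separating:
  assumes p: "2 \<le> p" and x: "x \<in> Fvec n p" and y: "y \<in> Fvec n p" and "x \<noteq> y"
  shows "\<exists>\<xi>\<in>Fvec n p. dotp n p x \<xi> \<noteq> dotp n p y \<xi>"
proof -
  obtain i where i: "x i \<noteq> y i" using \<open>x \<noteq> y\<close> by auto
  with x y have "i < n" unfolding Fvec_def by (cases "i < n") auto
  define e where "e j = (if j = i then 1 else 0 :: nat)" for j
  have e: "e \<in> Fvec n p" unfolding e_def Fvec_def using p \<open>i < n\<close> by auto
  have "dotp n p z e = z i" if "z \<in> Fvec n p" for z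
  proof -
    have "(\<Sum>j<n. z j * e j) = z i"
      unfolding e_def using \<open>i < n\<close> by (simp add: if_distrib cong: if_cong)
    then show ?thesis unfolding dotp_def using Fvec_mod[OF that] p by simp
  qed
  with x y i e show ?thesis by metis
qed

lemma Per_subspace: "0 < p \<Longrightarrow> is_subspace n p (Per n p S)"
  unfolding is_subspace_def Per_def
  by (auto simp: vzero_in_Fvec vadd_in_Fvec smul_in_Fvec dotp_vzero_left dotp_vadd_left dotp_smul_left)

lemma Per_empty: "Per n p {} = Fvec n p"
  unfolding Per_def by simp

lemma Per_insert: "Per n p (insert b S) = {\<xi> \<in> Per n p S. dotp n p b \<xi> = 0}"
  unfolding Per_def by (auto simp: dotp_commute)

lemma Fvec_subspace: "0 < p \<Longrightarrow> is_subspace n p (Fvec n p)"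
  using Per_subspace[of p n "{}"] by (simp add: Per_empty)

lemma dotp_Per_eq_if_mem_coset:
  assumes "0 < p" "y \<in> coset p x W" "\<xi> \<in> Per n p W"
  shows "dotp n p x \<xi> = dotp n p y \<xi>"
proof -
  obtain w where "w \<in> W" "y = vadd p x w" using assms(2) unfolding coset_def by auto
  moreover have "dotp n p w \<xi> = 0"
    using \<open>w \<in> W\<close> assms(3) unfolding Per_def by (auto simp: dotp_commute)
  ultimately show ?thesis using dotp_lt[OF assms(1)] by (simp add: dotp_vadd_left)
qed

section \<open>Equidistribution of linear functionals\<close>

lemma exists_mod_shift:
  fixes p u s t :: nat
  assumes "prime p" "0 < u" "u < p" "s < p"
  shows "\<exists>c<p. (t + c * u) mod p = s"
proof -
  have "coprime u p"
    using prime_imp_coprime[OF \<open>prime p\<close>, of u] nat_dvd_not_less assms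
    by (simp add: coprime_commute)
  then obtain v where v: "[u * v = 1] (mod p)"
    using cong_solve_coprime_nat by auto
  \<comment> \<open>m is congruent to s - t modulo p, and c to (s - t) / u\<close>
  define m where "m = s + (p - 1) * t"
  define c where "c = v * m mod p"
  have "[c = v * m] (mod p)"
    unfolding c_def cong_def by simp
  then have "[t + c * u = t + v * m * u] (mod p)"
    by (intro cong_add cong_mult cong_refl)
  also have "t + v * m * u = t + m * (u * v)"
    by (simp add: ac_simps)
  also have "[t + m * (u * v) = t + m * 1] (mod p)"
    using v by (intro cong_add cong_mult cong_refl)
  also have "t + m * 1 = s + p * t"
    unfolding m_def using assms by (cases p) auto
  finally have "(t + c * u) mod p = s"
    using assms by (simp add: cong_def)
  moreover have "c < p" unfolding c_def using assms by simp
  ultimately show ?thesis by blast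
qed

lemma card_dotp_fiber_le:
  assumes p: "prime p" and P: "is_subspace n p P" and \<xi>0: "\<xi>0 \<in> P" "dotp n p d \<xi>0 \<noteq> 0"
    and "s < p"
  shows "card {\<xi>\<in>P. dotp n p d \<xi> = t} \<le> card {\<xi>\<in>P. dotp n p d \<xi> = s}"
proof -
  have "0 < p" using p prime_gt_0_nat by blast
  obtain c where "c < p" and c: "(t + c * dotp n p d \<xi>0) mod p = s"
    using exists_mod_shift[OF p _ dotp_lt[OF \<open>0 < p\<close>] \<open>s < p\<close>] \<xi>0 by blast
  \<comment> \<open>translation by v shifts the functional by c * (d . xi0), so it maps the fibre over t into the one over s\<close>
  define v where "v = smul p c \<xi>0"
  have PF: "P \<subseteq> Fvec n p" and v: "v \<in> P"
    and P_add: "\<And>u w. u \<in> P \<Longrightarrow> w \<in> P \<Longrightarrow> vadd p u w \<in> P"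
    using P \<xi>0 \<open>c < p\<close> unfolding is_subspace_def v_def by auto
  have "dotp n p d (vadd p v \<xi>) = (t + c * dotp n p d \<xi>0) mod p" if "dotp n p d \<xi> = t" for \<xi>
    using that by (simp add: v_def dotp_vadd_right dotp_smul_right mod_simps add.commute)
  then have "vadd p v ` {\<xi>\<in>P. dotp n p d \<xi> = t} \<subseteq> {\<xi>\<in>P. dotp n p d \<xi> = s}"
    using v c P_add by auto
  moreover have "inj_on (vadd p v) {\<xi>\<in>P. dotp n p d \<xi> = t}"
    by (rule inj_on_subset[OF inj_on_vadd[OF \<open>0 < p\<close>, of v n]]) (use PF v in auto)
  moreover have "finite {\<xi>\<in>P. dotp n p d \<xi> = s}"
    using subspace_finite[OF P] by simp
  ultimately show ?thesis by (intro card_inj_on_le)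
qed

lemma card_subspace_eq_mult_card_kernel:
  assumes p: "prime p" and P: "is_subspace n p P" and "\<xi>0 \<in> P" "dotp n p d \<xi>0 \<noteq> 0"
  shows "card P = p * card {\<xi>\<in>P. dotp n p d \<xi> = 0}"
proof -
  have "0 < p" using p prime_gt_0_nat by blast
  have "dotp n p d ` P \<subseteq> {..<p}"
    using dotp_lt[OF \<open>0 < p\<close>] by auto
  then have "card P = (\<Sum>s<p. card {\<xi>\<in>P. dotp n p d \<xi> = s})"
    using sum.group[OF subspace_finite[OF P] finite_lessThan, where h="\<lambda>_. 1::nat"] by simp
  also have "\<dots> = (\<Sum>s<p. card {\<xi>\<in>P. dotp n p d \<xi> = 0})"
    using card_dotp_fiber_le[OF assms] \<open>0 < p\<close> by (intro sum.cong refl antisym) auto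
  finally show ?thesis by simp
qed

lemma card_subspace_eq_mult_card_agree:
  assumes p: "prime p" and P: "is_subspace n p P" and "x \<in> Fvec n p" "y \<in> Fvec n p"
    and "\<xi>0 \<in> P" "dotp n p x \<xi>0 \<noteq> dotp n p y \<xi>0"
  shows "card P = p * card {\<xi>\<in>P. dotp n p x \<xi> = dotp n p y \<xi>}"
proof -
  have "0 < p" using p prime_gt_0_nat by blast
  note agree_iff = dotp_eq_iff_dotp_vsub_eq_0[OF \<open>0 < p\<close> \<open>x \<in> Fvec n p\<close> \<open>y \<in> Fvec n p\<close>]
  show ?thesis
    using card_subspace_eq_mult_card_kernel[OF p P \<open>\<xi>0 \<in> P\<close>, of "vsub p y x"] assms(6)
    by (simp add: agree_iff)
qed

lemma card_Per_ge:
  assumes p: "prime p" and "finite S"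
  shows "p ^ n \<le> p ^ card S * card (Per n p S)"
  using \<open>finite S\<close>
proof (induction S rule: finite_induct)
  case empty
  then show ?case by (simp add: Per_empty card_Fvec)
next
  case (insert b S)
  have "0 < p" using p prime_gt_0_nat by blast
  have "card (Per n p S) \<le> p * card (Per n p (insert b S))"
  proof (cases "\<exists>\<xi>0\<in>Per n p S. dotp n p b \<xi>0 \<noteq> 0")
    case True
    then obtain \<xi>0 where "\<xi>0 \<in> Per n p S" "dotp n p b \<xi>0 \<noteq> 0" by blast
    from card_subspace_eq_mult_card_kernel[OF p Per_subspace[OF \<open>0 < p\<close>] this]
    show ?thesis by (simp add: Per_insert)
  next
    case False
    then have "Per n p (insert b S) = Per n p S" by (auto simp: Per_insert)
    then show ?thesis using \<open>0 < p\<close> by simp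
  qed
  then have "p ^ card S * card (Per n p S) \<le> p ^ card (insert b S) * card (Per n p (insert b S))"
    using insert by (simp add: mult.assoc)
  with insert.IH show ?case by linarith
qed

lemma card_Per_Grass_ge:
  assumes p: "prime p" and W: "W \<in> Grass p n k"
  shows "p ^ (n - k) \<le> card (Per n p W)"
proof -
  have "0 < p" using p prime_gt_0_nat by blast
  obtain b where W_span: "W = {lincomb p k c b | c. \<forall>j<k. c j < p}"
    using W unfolding Grass_def has_dim_def by blast
  have "Per n p (b ` {..<k}) \<subseteq> Per n p W"
    unfolding W_span Per_def by (auto simp: dotp_lincomb_right)
  then have "card (Per n p (b ` {..<k})) \<le> card (Per n p W)"
    by (rule card_mono[OF subspace_finite[OF Per_subspace[OF \<open>0 < p\<close>]]])
  moreover have "p ^ card (b ` {..<k}) \<le> p ^ k"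
    using \<open>0 < p\<close> card_image_le[of "{..<k}" b] by (simp add: power_increasing)
  moreover have "p ^ n \<le> p ^ card (b ` {..<k}) * card (Per n p (b ` {..<k}))"
    by (rule card_Per_ge[OF p]) simp
  ultimately have "p ^ n \<le> p ^ k * card (Per n p W)"
    by (meson le_trans mult_le_mono)
  moreover have "vzero \<in> Per n p W"
    using vzero_in_Fvec[OF \<open>0 < p\<close>] by (simp add: Per_def dotp_vzero_left)
  then have "0 < card (Per n p W)"
    using subspace_finite[OF Per_subspace[OF \<open>0 < p\<close>]] card_gt_0_iff by blast
  ultimately show ?thesis
  proof (cases "k \<le> n")
    case True
    with \<open>p ^ n \<le> p ^ k * card (Per n p W)\<close> have "p ^ k * p ^ (n - k) \<le> p ^ k * card (Per n p W)"
      by (simp flip: power_add)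
    then show ?thesis using \<open>0 < p\<close> by simp
  qed (use \<open>0 < card (Per n p W)\<close> in simp)
qed

section \<open>Collision counts\<close>

definition dot_collisions :: "nat \<Rightarrow> nat \<Rightarrow> (nat \<Rightarrow> nat) set \<Rightarrow> (nat \<Rightarrow> nat) \<Rightarrow> real" where
  "dot_collisions n p E \<xi> = (\<Sum>x\<in>E. \<Sum>y\<in>E. of_bool (dotp n p x \<xi> = dotp n p y \<xi>))"

definition joint_collisions :: "nat \<Rightarrow> nat \<Rightarrow> (nat \<Rightarrow> nat) set \<Rightarrow> (nat \<Rightarrow> nat) set \<Rightarrow> real" where
  "joint_collisions n p E P = (\<Sum>x\<in>E. \<Sum>y\<in>E. of_bool (\<forall>\<xi>\<in>P. dotp n p x \<xi> = dotp n p y \<xi>))"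

lemma dot_collisions_vzero: "dot_collisions n p E vzero = real (card E) ^ 2"
  unfolding dot_collisions_def by (simp add: dotp_vzero_right power2_eq_square)

lemma dot_collisions_ge:
  assumes p: "0 < p" and E: "finite E"
  shows "real (card E) ^ 2 / p \<le> dot_collisions n p E \<xi>"
proof -
  define d where "d x = dotp n p x \<xi>" for x
  define a where "a t = real (card {y\<in>E. d y = t})" for t
  have img: "d ` E \<subseteq> {..<p}"
    unfolding d_def using dotp_lt[OF p] by auto
  have "dot_collisions n p E \<xi> = (\<Sum>x\<in>E. a (d x))"
    unfolding dot_collisions_def a_def d_def using E
    by (intro sum.cong refl) (auto simp: Int_def intro!: arg_cong[where f = card])
  also have "\<dots> = (\<Sum>t<p. \<Sum>x\<in>{x\<in>E. d x = t}. a (d x))"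
    by (rule sum.group[OF E finite_lessThan img, symmetric])
  also have "\<dots> = (\<Sum>t<p. a t ^ 2)"
  proof (rule sum.cong[OF refl])
    fix t
    have "(\<Sum>x\<in>{x\<in>E. d x = t}. a (d x)) = (\<Sum>x\<in>{x\<in>E. d x = t}. a t)"
      by (rule sum.cong) auto
    then show "(\<Sum>x\<in>{x\<in>E. d x = t}. a (d x)) = a t ^ 2"
      by (simp add: a_def power2_eq_square)
  qed
  finally have collisions: "dot_collisions n p E \<xi> = (\<Sum>t<p. a t ^ 2)" .
  have "(\<Sum>t<p. a t) = real (card E)"
    using sum.group[OF E finite_lessThan img, where h = "\<lambda>_. 1::real"] unfolding a_def by simp
  then show ?thesis
    using sum_squared_le_sum_of_squares[of a "{..<p}"] p
    by (simp add: collisions pos_divide_le_eq)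
qed

lemma card_agree_in_subspace:
  assumes p: "prime p" and P: "is_subspace n p P" and "x \<in> Fvec n p" "y \<in> Fvec n p"
  shows "real (card {\<xi>\<in>P. dotp n p x \<xi> = dotp n p y \<xi>})
    = card P / p + (1 - 1 / p) * card P * of_bool (\<forall>\<xi>\<in>P. dotp n p x \<xi> = dotp n p y \<xi>)"
proof (cases "\<forall>\<xi>\<in>P. dotp n p x \<xi> = dotp n p y \<xi>")
  case True
  then have "{\<xi>\<in>P. dotp n p x \<xi> = dotp n p y \<xi>} = P" by auto
  with True show ?thesis by (simp add: algebra_simps)
next
  case False
  then obtain \<xi>0 where "\<xi>0 \<in> P" "dotp n p x \<xi>0 \<noteq> dotp n p y \<xi>0" by blast
  from card_subspace_eq_mult_card_agree[OF assms this] False p show ?thesis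
    by (simp add: prime_gt_0_nat)
qed

lemma sum_dot_collisions_excess_eq:
  assumes p: "prime p" and P: "is_subspace n p P" and E: "E \<subseteq> Fvec n p"
  shows "(\<Sum>\<xi>\<in>P. dot_collisions n p E \<xi> - real (card E) ^ 2 / p)
    = (1 - 1 / p) * card P * joint_collisions n p E P"
proof -
  have "(\<Sum>\<xi>\<in>P. dot_collisions n p E \<xi>)
      = (\<Sum>x\<in>E. \<Sum>y\<in>E. \<Sum>\<xi>\<in>P. of_bool (dotp n p x \<xi> = dotp n p y \<xi>))"
    unfolding dot_collisions_def by (subst sum.swap, rule sum.cong[OF refl], rule sum.swap)
  also have "\<dots> = (\<Sum>x\<in>E. \<Sum>y\<in>E. real (card {\<xi>\<in>P. dotp n p x \<xi> = dotp n p y \<xi>}))"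
    using subspace_finite[OF P] by (simp add: Int_def)
  also have "\<dots> = (\<Sum>x\<in>E. \<Sum>y\<in>E. card P / p
      + (1 - 1 / p) * card P * of_bool (\<forall>\<xi>\<in>P. dotp n p x \<xi> = dotp n p y \<xi>))"
    using card_agree_in_subspace[OF p P] E by (intro sum.cong refl) (simp add: subset_iff)
  also have "\<dots> = real (card E) ^ 2 * card P / p + (1 - 1 / p) * card P * joint_collisions n p E P"
    unfolding joint_collisions_def by (simp add: sum.distrib sum_distrib_left power2_eq_square)
  finally show ?thesis
    by (simp add: sum_subtractf)
qed

lemma joint_collisions_Fvec:
  assumes p: "2 \<le> p" and E: "E \<subseteq> Fvec n p"
  shows "joint_collisions n p E (Fvec n p) = card E"
proof -
  have "(\<forall>\<xi>\<in>Fvec n p. dotp n p x \<xi> = dotp n p y \<xi>) \<longleftrightarrow> y = x" if "x \<in> E" "y \<in> E" for x y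
    using exists_dotp_separating[OF p] E that by blast
  then have "joint_collisions n p E (Fvec n p) = (\<Sum>x\<in>E. \<Sum>y\<in>E. of_bool (y = x))"
    unfolding joint_collisions_def by (intro sum.cong refl) simp
  also have "\<dots> = card E"
    using E finite_subset[OF E finite_Fvec] by (simp add: of_bool_def sum.delta)
  finally show ?thesis .
qed

lemma sum_Fvec_dot_collisions_excess_le:
  assumes p: "prime p" and E: "E \<subseteq> Fvec n p"
  shows "(\<Sum>\<xi>\<in>Fvec n p. dot_collisions n p E \<xi> - real (card E) ^ 2 / p) \<le> card E * real p ^ n"
proof -
  have "0 < p" "2 \<le> p" using p prime_gt_0_nat prime_ge_2_nat by auto
  then have "(\<Sum>\<xi>\<in>Fvec n p. dot_collisions n p E \<xi> - real (card E) ^ 2 / p)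
      = (1 - 1 / p) * real p ^ n * card E"
    using sum_dot_collisions_excess_eq[OF p Fvec_subspace E] joint_collisions_Fvec[OF _ E]
    by (simp add: card_Fvec)
  also have "\<dots> \<le> card E * real p ^ n"
    by (simp add: mult.commute mult_left_mono mult_left_le)
  finally show ?thesis .
qed

lemma joint_collisions_le:
  assumes p: "prime p" and P: "is_subspace n p P" and E: "E \<subseteq> Fvec n p" and "p ^ m \<le> card P"
  shows "joint_collisions n p E P
    \<le> (real (card E) ^ 2 + 2 * (\<Sum>\<xi>\<in>P - {vzero}. dot_collisions n p E \<xi> - real (card E) ^ 2 / p))
      / real p ^ m"
proof -
  have "2 \<le> p" using p prime_ge_2_nat by blast
  have fE: "finite E" using E finite_Fvec finite_subset by blast
  define e2 where "e2 = real (card E) ^ 2"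
  define R where "R = (\<Sum>\<xi>\<in>P - {vzero}. dot_collisions n p E \<xi> - e2 / p)"
  define q where "q = real (card P)"
  define J where "J = joint_collisions n p E P"
  have R: "0 \<le> R"
    unfolding R_def e2_def using dot_collisions_ge[OF _ fE] \<open>2 \<le> p\<close> by (simp add: sum_nonneg)
  have "vzero \<in> P" using P unfolding is_subspace_def by blast
  then have "(1 - 1 / p) * q * J = (e2 - e2 / p) + R"
    using sum_dot_collisions_excess_eq[OF p P E] subspace_finite[OF P]
    by (simp add: sum.remove dot_collisions_vzero e2_def R_def q_def J_def)
  also have "\<dots> \<le> (1 - 1 / p) * (e2 + 2 * R)"
  proof -
    have "1 / 2 \<le> 1 - 1 / real p" using \<open>2 \<le> p\<close> by (simp add: field_simps)
    from mult_right_mono[OF this R] have "R \<le> (1 - 1 / p) * (2 * R)" by (simp add: ac_simps)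
    moreover have "(1 - 1 / p) * (e2 + 2 * R) = (e2 - e2 / p) + (1 - 1 / p) * (2 * R)"
      by (simp add: algebra_simps)
    ultimately show ?thesis by linarith
  qed
  finally have "(1 - 1 / p) * (q * J) \<le> (1 - 1 / p) * (e2 + 2 * R)"
    by (simp only: mult.assoc)
  moreover have "0 < 1 - 1 / real p" using \<open>2 \<le> p\<close> by (simp add: field_simps)
  ultimately have "q * J \<le> e2 + 2 * R"
    by (rule mult_left_le_imp_le)
  moreover have "real p ^ m * J \<le> q * J"
  proof (rule mult_right_mono)
    show "real p ^ m \<le> q"
      using \<open>p ^ m \<le> card P\<close> unfolding q_def by (metis of_nat_le_iff of_nat_power)
    show "0 \<le> J" unfolding J_def joint_collisions_def by (simp add: sum_nonneg)
  qed
  moreover have "0 < real p ^ m" using \<open>2 \<le> p\<close> by simp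
  ultimately show ?thesis
    unfolding e2_def R_def J_def by (simp add: pos_le_divide_eq mult.commute)
qed

section \<open>Energy bounds\<close>

lemma sum_sum_le_incidence_bound:
  fixes D :: "'b \<Rightarrow> real"
  assumes "finite G" "finite F" "\<And>W. W \<in> G \<Longrightarrow> S W \<subseteq> F" "\<And>\<xi>. \<xi> \<in> F \<Longrightarrow> 0 \<le> D \<xi>"
    and "\<And>\<xi>. \<xi> \<in> F \<Longrightarrow> real (card {W\<in>G. \<xi> \<in> S W}) \<le> B"
  shows "(\<Sum>W\<in>G. \<Sum>\<xi>\<in>S W. D \<xi>) \<le> B * (\<Sum>\<xi>\<in>F. D \<xi>)"
proof -
  have "(\<Sum>W\<in>G. \<Sum>\<xi>\<in>S W. D \<xi>) = (\<Sum>W\<in>G. \<Sum>\<xi>\<in>F. of_bool (\<xi> \<in> S W) * D \<xi>)"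
  proof (rule sum.cong[OF refl])
    fix W assume "W \<in> G"
    then have "F \<inter> {\<xi>. \<xi> \<in> S W} = S W" using assms(3) by auto
    then show "(\<Sum>\<xi>\<in>S W. D \<xi>) = (\<Sum>\<xi>\<in>F. of_bool (\<xi> \<in> S W) * D \<xi>)"
      using assms(2) by simp
  qed
  also have "\<dots> = (\<Sum>\<xi>\<in>F. \<Sum>W\<in>G. of_bool (\<xi> \<in> S W) * D \<xi>)"
    by (rule sum.swap)
  also have "\<dots> = (\<Sum>\<xi>\<in>F. real (card {W\<in>G. \<xi> \<in> S W}) * D \<xi>)"
    using assms(1) by (simp add: sum_distrib_right[symmetric] Int_def)
  also have "\<dots> \<le> (\<Sum>\<xi>\<in>F. B * D \<xi>)"
    using assms(4,5) by (intro sum_mono mult_right_mono) auto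
  finally show ?thesis by (simp add: sum_distrib_left)
qed

lemma energy_le_incidence:
  fixes B :: real
  assumes p: "0 < p" and G: "G \<subseteq> Grass p n k" and E: "E \<subseteq> Fvec n p" and "0 \<le> B"
    and B: "\<And>\<xi>. \<xi> \<in> Fvec n p - {vzero} \<Longrightarrow> real (card {W\<in>G. \<xi> \<in> W}) \<le> B"
  shows "real (energy E (cosets_of n p G)) \<le> card E * card G + real (card E) ^ 2 * B"
proof -
  have fG: "finite G" using G finite_Grass finite_subset by blast
  have sG: "\<And>W. W \<in> G \<Longrightarrow> is_subspace n p W" using G Grass_subspace by blast
  have fE: "finite E" using E finite_Fvec finite_subset by blast
  have pair_bound: "(\<Sum>W\<in>G. of_bool (y \<in> coset p x W)) \<le> of_bool (y = x) * real (card G) + B"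
    if "x \<in> E" "y \<in> E" for x y
  proof (cases "y = x")
    case True
    have "(\<Sum>W\<in>G. of_bool (y \<in> coset p x W)) \<le> (\<Sum>W\<in>G. 1::real)"
      by (intro sum_mono) simp
    with True \<open>0 \<le> B\<close> show ?thesis by simp
  next
    case False
    have x: "x \<in> Fvec n p" and y: "y \<in> Fvec n p" using that E by auto
    have "(\<Sum>W\<in>G. of_bool (y \<in> coset p x W)) \<le> (\<Sum>W\<in>G. of_bool (vsub p y x \<in> W) :: real)"
      using vsub_mem_if_mem_coset[OF p sG x] by (intro sum_mono) auto
    also have "\<dots> = real (card {W\<in>G. vsub p y x \<in> W})"
      using fG by (simp add: Int_def)
    also have "\<dots> \<le> B"
      using B vsub_in_Fvec[OF p x y] vsub_eq_vzero_imp_eq[OF p x y] False by blast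
    finally show ?thesis using False by simp
  qed
  have "real (energy E (cosets_of n p G)) \<le> (\<Sum>W\<in>G. \<Sum>x\<in>E. \<Sum>y\<in>E. of_bool (y \<in> coset p x W))"
    by (rule energy_le_sum_coset_pairs[OF p fG sG fE])
  also have "\<dots> = (\<Sum>x\<in>E. \<Sum>y\<in>E. \<Sum>W\<in>G. of_bool (y \<in> coset p x W))"
    by (subst sum.swap, rule sum.cong[OF refl], rule sum.swap)
  also have "\<dots> \<le> (\<Sum>x\<in>E. \<Sum>y\<in>E. of_bool (y = x) * real (card G) + B)"
    using pair_bound by (intro sum_mono) auto
  also have "\<dots> = card E * card G + real (card E) ^ 2 * B"
    using fE by (simp add: sum.distrib sum_distrib_right[symmetric] of_bool_def power2_eq_square distrib_left)
  finally show ?thesis .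
qed

lemma coset_pairs_le_Per_collisions:
  assumes p: "prime p" and W: "W \<in> Grass p n k" and E: "E \<subseteq> Fvec n p"
  shows "(\<Sum>x\<in>E. \<Sum>y\<in>E. of_bool (y \<in> coset p x W))
    \<le> (real (card E) ^ 2 + 2 * (\<Sum>\<xi>\<in>Per n p W - {vzero}. dot_collisions n p E \<xi> - real (card E) ^ 2 / p))
      / real p ^ (n - k)"
proof -
  have "0 < p" using p prime_gt_0_nat by blast
  have "(\<Sum>x\<in>E. \<Sum>y\<in>E. of_bool (y \<in> coset p x W)) \<le> joint_collisions n p E (Per n p W)"
    unfolding joint_collisions_def using dotp_Per_eq_if_mem_coset[OF \<open>0 < p\<close>]
    by (intro sum_mono) auto
  also have "\<dots> \<le> (real (card E) ^ 2 + 2 * (\<Sum>\<xi>\<in>Per n p W - {vzero}. dot_collisions n p E \<xi> - real (card E) ^ 2 / p))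
      / real p ^ (n - k)"
    by (rule joint_collisions_le[OF p Per_subspace[OF \<open>0 < p\<close>] E card_Per_Grass_ge[OF p W]])
  finally show ?thesis .
qed

lemma energy_le_Per_incidence:
  fixes B :: real
  assumes p: "prime p" and G: "G \<subseteq> Grass p n k" and E: "E \<subseteq> Fvec n p" and "0 \<le> B"
    and B: "\<And>\<xi>. \<xi> \<in> Fvec n p - {vzero} \<Longrightarrow> real (card {W\<in>G. \<xi> \<in> Per n p W}) \<le> B"
  shows "real (energy E (cosets_of n p G))
    \<le> (card G * real (card E) ^ 2 + 2 * B * real (card E) * real p ^ n) / real p ^ (n - k)"
proof -
  have "0 < p" using p prime_gt_0_nat by blast
  have fG: "finite G" using G finite_Grass finite_subset by blast
  have sG: "\<And>W. W \<in> G \<Longrightarrow> is_subspace n p W" using G Grass_subspace by blast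
  have fE: "finite E" using E finite_Fvec finite_subset by blast
  define D where "D \<xi> = dot_collisions n p E \<xi> - real (card E) ^ 2 / p" for \<xi>
  define e2 where "e2 = real (card E) ^ 2"
  have D: "0 \<le> D \<xi>" for \<xi> unfolding D_def using dot_collisions_ge[OF \<open>0 < p\<close> fE] by simp
  have "(\<Sum>x\<in>E. \<Sum>y\<in>E. of_bool (y \<in> coset p x W))
      \<le> (e2 + 2 * (\<Sum>\<xi>\<in>Per n p W - {vzero}. D \<xi>)) / real p ^ (n - k)" if "W \<in> G" for W
    unfolding e2_def D_def using coset_pairs_le_Per_collisions[OF p _ E] G that by blast
  then have "real (energy E (cosets_of n p G))
      \<le> (\<Sum>W\<in>G. (e2 + 2 * (\<Sum>\<xi>\<in>Per n p W - {vzero}. D \<xi>)) / real p ^ (n - k))"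
    using energy_le_sum_coset_pairs[OF \<open>0 < p\<close> fG sG fE] by (meson order_trans sum_mono)
  also have "\<dots> = (card G * e2 + 2 * (\<Sum>W\<in>G. \<Sum>\<xi>\<in>Per n p W - {vzero}. D \<xi>)) / real p ^ (n - k)"
    by (simp add: sum_divide_distrib[symmetric] sum.distrib sum_distrib_left)
  also have "(\<Sum>W\<in>G. \<Sum>\<xi>\<in>Per n p W - {vzero}. D \<xi>) \<le> B * (\<Sum>\<xi>\<in>Fvec n p - {vzero}. D \<xi>)"
  proof (rule sum_sum_le_incidence_bound[OF fG])
    show "finite (Fvec n p - {vzero})" using finite_Fvec by simp
    show "Per n p W - {vzero} \<subseteq> Fvec n p - {vzero}" for W unfolding Per_def by auto
    show "real (card {W\<in>G. \<xi> \<in> Per n p W - {vzero}}) \<le> B" if "\<xi> \<in> Fvec n p - {vzero}" for \<xi>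
      using B[OF that] that by simp
  qed (rule D)
  also have "(\<Sum>\<xi>\<in>Fvec n p - {vzero}. D \<xi>) \<le> (\<Sum>\<xi>\<in>Fvec n p. D \<xi>)"
    by (rule sum_mono2[OF finite_Fvec]) (use D in auto)
  also have "\<dots> \<le> card E * real p ^ n"
    using sum_Fvec_dot_collisions_excess_le[OF p E] unfolding D_def .
  finally show ?thesis
    using \<open>0 \<le> B\<close> \<open>0 < p\<close> unfolding e2_def
    by (simp add: divide_right_mono mult_left_mono mult.assoc)
qed

lemma energy_lesssim_incidence:
  fixes C2 \<beta> :: real
  assumes "0 < C2"
  shows "\<exists>C>0. \<forall>p G E. prime p \<longrightarrow> G \<subseteq> Grass p n k \<longrightarrow> E \<subseteq> Fvec n p \<longrightarrow>
       (\<forall>\<xi>\<in>Fvec n p - {vzero}.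
          real (card {W\<in>G. \<xi> \<in> W}) \<le> C2 * real (card G) * real p powr (-\<beta>)) \<longrightarrow>
       real (energy E (cosets_of n p G))
         \<le> C * (real (card E) * real (card G)
                + real (card E) ^ 2 * real (card G) * real p powr (-\<beta>))"
proof (intro exI[of _ "1 + C2"] conjI allI impI)
  show "0 < 1 + C2" using assms by simp
  fix p G E
  assume p: "prime p" and G: "G \<subseteq> Grass p n k" and E: "E \<subseteq> Fvec n p"
    and hyp: "\<forall>\<xi>\<in>Fvec n p - {vzero}. real (card {W\<in>G. \<xi> \<in> W}) \<le> C2 * real (card G) * real p powr (-\<beta>)"
  define e g X where "e = real (card E)" and "g = real (card G)" and "X = real p powr (-\<beta>)"
  have "0 \<le> e" "0 \<le> g" "0 \<le> X" unfolding e_def g_def X_def by auto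
  have "real (energy E (cosets_of n p G)) \<le> e * g + e ^ 2 * (C2 * g * X)"
    unfolding e_def g_def X_def
    using energy_le_incidence[OF prime_gt_0_nat[OF p] G E _ bspec[OF hyp]] assms by simp
  also have "\<dots> \<le> (1 + C2) * (e * g + e ^ 2 * g * X)"
    using assms \<open>0 \<le> e\<close> \<open>0 \<le> g\<close> \<open>0 \<le> X\<close> by (simp add: algebra_simps)
  finally show "real (energy E (cosets_of n p G))
      \<le> (1 + C2) * (real (card E) * real (card G) + real (card E) ^ 2 * real (card G) * real p powr (-\<beta>))"
    unfolding e_def g_def X_def .
qed

lemma energy_lesssim_Per_incidence:
  fixes C2 \<beta> :: real
  assumes "0 < C2"
  shows "\<exists>C>0. \<forall>p G E. prime p \<longrightarrow> G \<subseteq> Grass p n k \<longrightarrow> E \<subseteq> Fvec n p \<longrightarrow>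
       (\<forall>\<xi>\<in>Fvec n p - {vzero}.
          real (card {W\<in>G. \<xi> \<in> Per n p W}) \<le> C2 * real (card G) * real p powr (-\<beta>)) \<longrightarrow>
       real (energy E (cosets_of n p G))
         \<le> C * (real p powr (- real (n - k)) * real (card G)
                * (real (card E) ^ 2 + real (card E) * real p powr (real n - \<beta>)))"
proof (intro exI[of _ "1 + 2 * C2"] conjI allI impI)
  show "0 < 1 + 2 * C2" using assms by simp
  fix p G E
  assume p: "prime p" and G: "G \<subseteq> Grass p n k" and E: "E \<subseteq> Fvec n p"
    and hyp: "\<forall>\<xi>\<in>Fvec n p - {vzero}.
      real (card {W\<in>G. \<xi> \<in> Per n p W}) \<le> C2 * real (card G) * real p powr (-\<beta>)"
  have "0 < p" using p prime_gt_0_nat by blast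
  define e g X Q where "e = real (card E)" and "g = real (card G)" and "X = real p powr (-\<beta>)"
    and "Q = real p powr (- real (n - k))"
  have "0 \<le> e" "0 \<le> g" "0 \<le> X" "0 \<le> Q" unfolding e_def g_def X_def Q_def by auto
  have "real (energy E (cosets_of n p G)) \<le> (g * e ^ 2 + 2 * (C2 * g * X) * e * real p ^ n) / real p ^ (n - k)"
    unfolding e_def g_def X_def
    using energy_le_Per_incidence[OF p G E _ bspec[OF hyp]] assms by simp
  also have "\<dots> = Q * g * (e ^ 2 + 2 * C2 * (e * (real p ^ n * X)))"
    using \<open>0 < p\<close> unfolding Q_def by (simp add: powr_minus powr_realpow field_simps)
  also have "\<dots> \<le> (1 + 2 * C2) * (Q * g * (e ^ 2 + e * (real p ^ n * X)))"
    using assms \<open>0 \<le> e\<close> \<open>0 \<le> g\<close> \<open>0 \<le> X\<close> \<open>0 \<le> Q\<close> by (simp add: algebra_simps)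
  also have "real p ^ n * X = real p powr (real n - \<beta>)"
    using \<open>0 < p\<close> unfolding X_def by (simp add: powr_diff powr_minus powr_realpow divide_inverse)
  finally show "real (energy E (cosets_of n p G))
      \<le> (1 + 2 * C2) * (real p powr (- real (n - k)) * real (card G)
         * (real (card E) ^ 2 + real (card E) * real p powr (real n - \<beta>)))"
    unfolding e_def g_def Q_def .
qed

theorem lemma2p3:
  fixes n m :: nat and \<beta> :: real
  assumes "n \<ge> 2" and "1 \<le> m" and "m \<le> n - 1" and "\<beta> > 0"
  shows
   "(\<forall>C1>0. \<forall>C2>0. \<exists>C>0. \<forall>p G E.
       prime p \<longrightarrow> G \<subseteq> Grass p n (n - m) \<longrightarrow>
       real (card G) \<ge> C1 * real p powr \<beta> \<longrightarrow> E \<subseteq> Fvec n p \<longrightarrow>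
       (\<forall>\<xi>\<in>Fvec n p - {vzero}.
          real (card {W\<in>G. \<xi> \<in> W}) \<le> C2 * real (card G) * real p powr (-\<beta>)) \<longrightarrow>
       real (energy E (cosets_of n p G))
         \<le> C * (real (card E) * real (card G)
                + real (card E) ^ 2 * real (card G) * real p powr (-\<beta>)))
  \<and> (\<forall>C1>0. \<forall>C2>0. \<exists>C>0. \<forall>p G E.
       prime p \<longrightarrow> G \<subseteq> Grass p n (n - m) \<longrightarrow>
       real (card G) \<ge> C1 * real p powr \<beta> \<longrightarrow> E \<subseteq> Fvec n p \<longrightarrow>
       (\<forall>\<xi>\<in>Fvec n p - {vzero}.
          real (card {W\<in>G. \<xi> \<in> Per n p W}) \<le> C2 * real (card G) * real p powr (-\<beta>)) \<longrightarrow>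
       real (energy E (cosets_of n p G))
         \<le> C * (real p powr (- real m) * real (card G)
                * (real (card E) ^ 2 + real (card E) * real p powr (real n - \<beta>))))"
proof -
  have "n - (n - m) = m" using assms by simp
  note part1 = energy_lesssim_incidence[where n = n and k = "n - m" and \<beta> = \<beta>]
  note part2 = energy_lesssim_Per_incidence[where n = n and k = "n - m" and \<beta> = \<beta>,
      unfolded \<open>n - (n - m) = m\<close>]
  show ?thesis
    using part1 part2 by meson
qed

end
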